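(* Let $r\geq 3$. There exists a constant $C$ depending only on $r$ such that the following holds. Let $G$ be an $n$-vertex $K_r$-minor free bipartite graph with vertex partition $A$ and $B$, where $|A|=k$ and $|B|=n-k$. Then $e(G)\leq (r-2)n+Ck$.
   Context: $e(G)$ denotes the number of edges of $G$. A graph is $K_r$-minor free if $K_r$ cannot be obtained from it by vertex deletions, edge deletions and edge contractions. *)

theory Defs
  imports Complex_Main
begin

text \<open>A finite simple graph is a pair (V, E): a finite vertex set V and a set E of
  edges, each edge being a 2-element subset of V. e(G) = card E.\<close>

definition simple_graph :: "'a set \<Rightarrow> 'a set set \<Rightarrow> bool" where
  "simple_graph V E \<longleftrightarrow> finite V \<and> (\<forall>e\<in>E. e \<subseteq> V \<and> card e = 2)"

definition delete_vertex :: "'a \<Rightarrow> 'a set \<times> 'a set set \<Rightarrow> 'a set \<times> 'a set set" where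
  "delete_vertex v G = (fst G - {v}, {e \<in> snd G. v \<notin> e})"

definition delete_edge :: "'a set \<Rightarrow> 'a set \<times> 'a set set \<Rightarrow> 'a set \<times> 'a set set" where
  "delete_edge e G = (fst G, snd G - {e})"

text \<open>Contracting the edge {u,v}: v is merged into u; parallel edges and loops are
  discarded, so the result is again simple.\<close>
definition contract_edge :: "'a \<Rightarrow> 'a \<Rightarrow> 'a set \<times> 'a set set \<Rightarrow> 'a set \<times> 'a set set" where
  "contract_edge u v G =
     (fst G - {v}, {e \<in> snd G. v \<notin> e} \<union> {{u, w} | w. {v, w} \<in> snd G \<and> w \<noteq> u})"

inductive minor_step :: "'a set \<times> 'a set set \<Rightarrow> 'a set \<times> 'a set set \<Rightarrow> bool" where
  del_v: "v \<in> fst G \<Longrightarrow> minor_step G (delete_vertex v G)"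
| del_e: "e \<in> snd G \<Longrightarrow> minor_step G (delete_edge e G)"
| contr: "{u, v} \<in> snd G \<Longrightarrow> u \<noteq> v \<Longrightarrow> minor_step G (contract_edge u v G)"

definition is_minor :: "'a set \<times> 'a set set \<Rightarrow> 'a set \<times> 'a set set \<Rightarrow> bool" where
  "is_minor H G \<longleftrightarrow> minor_step\<^sup>*\<^sup>* G H"

text \<open>A graph on vertex set W is (isomorphic to) K_r iff |W| = r and all pairs are edges.\<close>
definition complete_graph_on :: "'a set \<Rightarrow> 'a set set" where
  "complete_graph_on W = {e. e \<subseteq> W \<and> card e = 2}"

definition Kr_minor_free :: "nat \<Rightarrow> 'a set \<Rightarrow> 'a set set \<Rightarrow> bool" where
  "Kr_minor_free r V E \<longleftrightarrow>
     \<not> (\<exists>W. card W = r \<and> finite W \<and> is_minor (W, complete_graph_on W) (V, E))"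

definition bipartite_with :: "'a set \<Rightarrow> 'a set set \<Rightarrow> 'a set \<Rightarrow> 'a set \<Rightarrow> bool" where
  "bipartite_with V E A B \<longleftrightarrow> A \<union> B = V \<and> A \<inter> B = {} \<and>
     (\<forall>e\<in>E. \<exists>a\<in>A. \<exists>b\<in>B. e = {a, b})"

end

theory Submission
  imports Defs
begin

(* A K_r-minor-free graph has at most D_r |V| edges, where D_0 = 0 and D_(r+1) = 2 D_r + 1: if some
   edge xz lies in fewer than D_(r+1) triangles, contracting it costs at most D_(r+1) edges and one
   vertex; otherwise every vertex of N(x) has at least D_(r+1) neighbours in N(x), so G[N(x)] has
   more than D_r |N(x)| edges, hence a K_r minor, to which x adds an apex.

   For the bipartite bound allow edges inside A but none inside B, and remove the vertices of B one
   at a time, tracking the potential e(G) + (2D + 1) e(G[A]) with D = D_r. A vertex b of degree at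
   most r - 2 is deleted, which costs at most r - 2. Otherwise N(b) is not a clique, since together
   with b it would span a K_r; so the neighbour a of b of least degree in G[N(b)] has t + 1 < |N(b)|
   common neighbours with b, and t <= 2D by the first bound applied to G[N(b)]. Contracting b into
   a destroys 1 + t edges but creates at least one new edge inside A, which carries weight 2D + 1,
   so the potential does not drop. Once B is empty all edges lie inside A and the potential is at
   most (2D + 2) D |A|. *)

definition neighbours :: "'a set set \<Rightarrow> 'a \<Rightarrow> 'a set" where
  "neighbours E x = {w. {x, w} \<in> E}"

lemma simple_graph_edgeE:
  assumes "simple_graph V E" "e \<in> E"
  obtains a b where "e = {a, b}" "a \<noteq> b" "a \<in> V" "b \<in> V"
  using assms unfolding simple_graph_def by (metis card_2_iff insert_subset)

lemma simple_graph_finite_edges: "simple_graph V E \<Longrightarrow> finite E"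
  unfolding simple_graph_def by (meson Pow_iff finite_Pow_iff finite_subset subsetI)

lemma simple_graph_induced: "simple_graph V E \<Longrightarrow> S \<subseteq> V \<Longrightarrow> simple_graph S {e\<in>E. e \<subseteq> S}"
  unfolding simple_graph_def by (auto intro: finite_subset)

lemma neighbours_subset: "simple_graph V E \<Longrightarrow> neighbours E x \<subseteq> V"
  unfolding neighbours_def simple_graph_def by auto

lemma finite_neighbours: "simple_graph V E \<Longrightarrow> finite (neighbours E x)"
  using neighbours_subset simple_graph_def finite_subset by metis

lemma not_in_neighbours_self: "simple_graph V E \<Longrightarrow> x \<notin> neighbours E x"
  unfolding neighbours_def simple_graph_def by force

lemma in_neighbours_commute: "y \<in> neighbours E x \<longleftrightarrow> x \<in> neighbours E y"
  unfolding neighbours_def by (simp add: insert_commute)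

lemma inj_on_doubleton: "inj_on (\<lambda>w. {v, w}) X"
  by (rule inj_onI) (auto simp: doubleton_eq_iff)

lemma edges_at_vertex:
  assumes "simple_graph V E"
  shows "{e\<in>E. v \<in> e} = (\<lambda>w. {v, w}) ` neighbours E v"
proof (intro set_eqI iffI)
  fix e assume e: "e \<in> {e\<in>E. v \<in> e}"
  then obtain a b where "e = {a, b}" using simple_graph_edgeE[OF assms] by blast
  with e show "e \<in> (\<lambda>w. {v, w}) ` neighbours E v"
    unfolding neighbours_def by (auto simp: insert_commute)
qed (auto simp: neighbours_def)

lemma card_edges_split_vertex:
  assumes "simple_graph V E"
  shows "card E = card {e\<in>E. v \<notin> e} + card (neighbours E v)"
proof -
  have "card E = card {e\<in>E. v \<notin> e} + card {e\<in>E. v \<in> e}"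
    using simple_graph_finite_edges[OF assms]
    by (subst card_Un_disjoint[symmetric]) (auto intro: arg_cong[where f = card])
  also have "card {e\<in>E. v \<in> e} = card (neighbours E v)"
    unfolding edges_at_vertex[OF assms] by (rule card_image[OF inj_on_doubleton])
  finally show ?thesis .
qed

lemma card_neighbours_split:
  assumes "simple_graph V E" "u \<in> neighbours E v"
  shows "card (neighbours E v) = card (neighbours E v - insert u (neighbours E u)) + 1
    + card (neighbours E u \<inter> neighbours E v)"
proof -
  let ?new = "neighbours E v - insert u (neighbours E u)"
  let ?common = "neighbours E u \<inter> neighbours E v"
  have fin: "finite (neighbours E v)" using finite_neighbours[OF assms(1)] .
  have "card (neighbours E v) = card (?new \<union> insert u ?common)"
    using assms(2) by (intro arg_cong[where f = card]) auto
  also have "\<dots> = card ?new + card (insert u ?common)"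
    by (rule card_Un_disjoint) (use fin in auto)
  also have "card (insert u ?common) = card ?common + 1"
    using fin not_in_neighbours_self[OF assms(1), of u] by simp
  finally show ?thesis by simp
qed

lemma handshake:
  assumes "simple_graph V E" "S \<subseteq> V"
  shows "(\<Sum>y\<in>S. card (neighbours E y \<inter> S)) = 2 * card {e\<in>E. e \<subseteq> S}"
proof -
  define F where "F = {e\<in>E. e \<subseteq> S}"
  have fS: "finite S" using assms unfolding simple_graph_def by (auto intro: finite_subset)
  have fF: "finite F" using simple_graph_finite_edges[OF assms(1)] F_def by auto
  have "card (neighbours E y \<inter> S) = card {e\<in>F. y \<in> e}" if "y \<in> S" for y
  proof -
    have "{e\<in>F. y \<in> e} = (\<lambda>w. {y, w}) ` (neighbours E y \<inter> S)"
    proof (intro set_eqI iffI)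
      fix e assume e: "e \<in> {e\<in>F. y \<in> e}"
      then have "e \<in> (\<lambda>w. {y, w}) ` neighbours E y"
        using edges_at_vertex[OF assms(1), of y] unfolding F_def by blast
      then obtain w where "w \<in> neighbours E y" "e = {y, w}" by blast
      with e show "e \<in> (\<lambda>w. {y, w}) ` (neighbours E y \<inter> S)" unfolding F_def by auto
    qed (use that in \<open>auto simp: F_def neighbours_def\<close>)
    then show ?thesis by (simp add: card_image[OF inj_on_doubleton])
  qed
  also have "card {e\<in>F. y \<in> e} = (\<Sum>e\<in>F. if y \<in> e then 1 else 0)" for y
    using sum.inter_filter[OF fF, of "\<lambda>_. 1::nat" "\<lambda>e. y \<in> e"] by simp
  finally have "(\<Sum>y\<in>S. card (neighbours E y \<inter> S))
      = (\<Sum>y\<in>S. \<Sum>e\<in>F. if y \<in> e then 1 else 0)"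
    by (intro sum.cong) auto
  also have "\<dots> = (\<Sum>e\<in>F. \<Sum>y\<in>S. if y \<in> e then 1 else 0)" by (rule sum.swap)
  also have "\<dots> = (\<Sum>e\<in>F. card e)"
  proof (intro sum.cong refl)
    fix e assume "e \<in> F"
    then have "{y\<in>S. y \<in> e} = e" unfolding F_def by auto
    then show "(\<Sum>y\<in>S. if y \<in> e then 1 else 0) = card e"
      using sum.inter_filter[OF fS, of "\<lambda>_. 1::nat" "\<lambda>y. y \<in> e"] by simp
  qed
  also have "\<dots> = 2 * card F"
    using assms(1) unfolding F_def simple_graph_def by simp
  finally show ?thesis unfolding F_def .
qed

lemma min_degree_le_edges:
  assumes "simple_graph V E" "S \<subseteq> V" "\<forall>y\<in>S. k \<le> card (neighbours E y \<inter> S)"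
  shows "k * card S \<le> 2 * card {e\<in>E. e \<subseteq> S}"
proof -
  have "k * card S = (\<Sum>y\<in>S. k)" by simp
  also have "\<dots> \<le> (\<Sum>y\<in>S. card (neighbours E y \<inter> S))" using assms(3) by (intro sum_mono) auto
  finally show ?thesis unfolding handshake[OF assms(1,2)] .
qed

lemma minor_step_vertices_subset: "minor_step G H \<Longrightarrow> fst H \<subseteq> fst G"
  by (induction rule: minor_step.induct)
    (auto simp: delete_vertex_def delete_edge_def contract_edge_def)

lemma minor_vertices_subset: "is_minor H G \<Longrightarrow> fst H \<subseteq> fst G"
  unfolding is_minor_def
  by (induction rule: rtranclp_induct) (use minor_step_vertices_subset in blast)+

lemma simple_graph_minor_step:
  assumes "minor_step G H" "simple_graph (fst G) (snd G)"
  shows "simple_graph (fst H) (snd H)"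
  using assms
proof cases
  case (contr u v)
  have "u \<in> fst G" using contr assms(2) unfolding simple_graph_def by auto
  have "e \<subseteq> fst G - {v} \<and> card e = 2" if "e \<in> snd H" for e
  proof -
    from that contr
    consider "e \<in> snd G" "v \<notin> e" | w where "e = {u, w}" "{v, w} \<in> snd G" "w \<noteq> u"
      unfolding contract_edge_def by auto
    then show ?thesis
    proof cases
      case 1
      then show ?thesis using assms(2) unfolding simple_graph_def by auto
    next
      case (2 w)
      then have "w \<in> fst G" "w \<noteq> v"
        using simple_graph_edgeE[OF assms(2) 2(2)] by (metis doubleton_eq_iff)+
      then show ?thesis using 2 \<open>u \<in> fst G\<close> contr by auto
    qed
  qed
  then show ?thesis
    using assms(2) contr unfolding simple_graph_def contract_edge_def by auto
qed (use assms(2) in \<open>auto simp: simple_graph_def delete_vertex_def delete_edge_def\<close>)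

lemma simple_graph_minor:
  "is_minor H G \<Longrightarrow> simple_graph (fst G) (snd G) \<Longrightarrow> simple_graph (fst H) (snd H)"
  unfolding is_minor_def
  by (induction rule: rtranclp_induct) (use simple_graph_minor_step in blast)+

lemma is_minor_trans: "is_minor H G \<Longrightarrow> is_minor G K \<Longrightarrow> is_minor H K"
  unfolding is_minor_def by auto

lemma Kr_minor_free_minor:
  "Kr_minor_free r V E \<Longrightarrow> is_minor (V', E') (V, E) \<Longrightarrow> Kr_minor_free r V' E'"
  unfolding Kr_minor_free_def using is_minor_trans by blast

lemma Kr_minor_free_minor_step:
  "Kr_minor_free r V E \<Longrightarrow> minor_step (V, E) (V', E') \<Longrightarrow> Kr_minor_free r V' E'"
  using Kr_minor_free_minor unfolding is_minor_def by blast

lemma minor_step_delete_vertex: "v \<in> V \<Longrightarrow> minor_step (V, E) (V - {v}, {e\<in>E. v \<notin> e})"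
  using minor_step.del_v[of v "(V, E)"] by (simp add: delete_vertex_def)

lemma minor_step_contract_edge:
  "{u, v} \<in> E \<Longrightarrow> u \<noteq> v \<Longrightarrow> minor_step (V, E) (V - {v}, snd (contract_edge u v (V, E)))"
  using minor_step.contr[of u v "(V, E)"] by (simp add: contract_edge_def)

lemma delete_vertices_is_minor:
  assumes "finite T" "T \<subseteq> V"
  shows "is_minor (V - T, {e\<in>E. e \<inter> T = {}}) (V, E)"
  using assms
proof (induction T rule: finite_induct)
  case (insert t T)
  have "minor_step (V - T, {e\<in>E. e \<inter> T = {}})
      (V - T - {t}, {e \<in> {e\<in>E. e \<inter> T = {}}. t \<notin> e})"
    by (rule minor_step_delete_vertex) (use insert in auto)
  moreover have "(V - T - {t}, {e \<in> {e\<in>E. e \<inter> T = {}}. t \<notin> e})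
      = (V - insert t T, {e\<in>E. e \<inter> insert t T = {}})"
    by blast
  moreover have "is_minor (V - T, {e\<in>E. e \<inter> T = {}}) (V, E)" using insert by simp
  ultimately show ?case unfolding is_minor_def by (simp add: rtranclp.rtrancl_into_rtrancl)
qed (simp add: is_minor_def)

lemma induced_is_minor:
  assumes "simple_graph V E" "S \<subseteq> V"
  shows "is_minor (S, {e\<in>E. e \<subseteq> S}) (V, E)"
proof -
  have "finite (V - S)" using assms(1) unfolding simple_graph_def by auto
  moreover have "V - (V - S) = S" using assms(2) by auto
  moreover have "{e\<in>E. e \<inter> (V - S) = {}} = {e\<in>E. e \<subseteq> S}"
    using assms(1) unfolding simple_graph_def by auto
  ultimately show ?thesis using delete_vertices_is_minor[of "V - S" V E] by auto
qed

lemma Kr_minor_free_induced: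
  "simple_graph V E \<Longrightarrow> Kr_minor_free r V E \<Longrightarrow> S \<subseteq> V \<Longrightarrow> Kr_minor_free r S {e\<in>E. e \<subseteq> S}"
  using Kr_minor_free_minor induced_is_minor by blast

definition clique :: "'a set set \<Rightarrow> 'a set \<Rightarrow> bool" where
  "clique E S \<longleftrightarrow> (\<forall>a\<in>S. \<forall>b\<in>S. a \<noteq> b \<longrightarrow> {a, b} \<in> E)"

lemma Kr_minor_free_clique_card_less:
  assumes "simple_graph V E" "Kr_minor_free r V E" "S \<subseteq> V" "clique E S"
  shows "card S < r"
proof (rule ccontr)
  assume "\<not> card S < r"
  then obtain W where W: "W \<subseteq> S" "card W = r" "finite W"
    using obtain_subset_with_card_n[of r S] by auto
  have "{e\<in>E. e \<subseteq> W} = complete_graph_on W"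
  proof (intro set_eqI iffI)
    fix e assume "e \<in> complete_graph_on W"
    then obtain a b where "e = {a, b}" "a \<noteq> b" "e \<subseteq> W"
      unfolding complete_graph_on_def by (auto simp: card_2_iff)
    then show "e \<in> {e\<in>E. e \<subseteq> W}" using assms(4) W(1) unfolding clique_def by auto
  qed (use assms(1) in \<open>auto simp: complete_graph_on_def simple_graph_def\<close>)
  then have "is_minor (W, complete_graph_on W) (V, E)"
    using induced_is_minor[OF assms(1), of W] W(1) assms(3) by simp
  then show False using assms(2) W(2,3) unfolding Kr_minor_free_def by blast
qed

definition cone :: "'a \<Rightarrow> 'a set \<times> 'a set set \<Rightarrow> 'a set \<times> 'a set set" where
  "cone x G = (insert x (fst G), snd G \<union> {{x, w} | w. w \<in> fst G})"

lemma cone_minor_step: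
  assumes "minor_step G H" "simple_graph (fst G) (snd G)" "x \<notin> fst G"
  shows "minor_step (cone x G) (cone x H)"
  using assms(1)
proof cases
  case (del_v v)
  then have "delete_vertex v (cone x G) = cone x H"
    using assms(3) unfolding cone_def delete_vertex_def by auto
  moreover have "v \<in> fst (cone x G)" using del_v unfolding cone_def by simp
  ultimately show ?thesis using minor_step.del_v by metis
next
  case (del_e e)
  then have "x \<notin> e" using assms(2,3) unfolding simple_graph_def by auto
  then have "delete_edge e (cone x G) = cone x H"
    using del_e unfolding cone_def delete_edge_def by auto
  moreover have "e \<in> snd (cone x G)" using del_e unfolding cone_def by simp
  ultimately show ?thesis using minor_step.del_e by metis
next
  case (contr u v)
  then have "u \<in> fst G" "v \<in> fst G" using assms(2) unfolding simple_graph_def by auto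
  then have "contract_edge u v (cone x G) = cone x H"
    using contr assms(3) unfolding cone_def contract_edge_def by (auto simp: doubleton_eq_iff)
  moreover have "{u, v} \<in> snd (cone x G)" using contr unfolding cone_def by simp
  ultimately show ?thesis using minor_step.contr contr(3) by metis
qed

lemma cone_minor:
  assumes "is_minor H G" "simple_graph (fst G) (snd G)" "x \<notin> fst G"
  shows "is_minor (cone x H) (cone x G)"
  using assms(1) unfolding is_minor_def
proof (induction rule: rtranclp_induct)
  case (step K H)
  then have "simple_graph (fst K) (snd K)" "x \<notin> fst K"
    using assms(2,3) simple_graph_minor minor_vertices_subset unfolding is_minor_def by blast+
  then show ?case using step cone_minor_step by (metis rtranclp.rtrancl_into_rtrancl)
qed simp

lemma cone_neighbours:
  assumes "simple_graph V E"
  shows "cone x (neighbours E x, {e\<in>E. e \<subseteq> neighbours E x})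
    = (insert x (neighbours E x), {e\<in>E. e \<subseteq> insert x (neighbours E x)})"
proof -
  have "{e\<in>E. x \<in> e} \<subseteq> {e. e \<subseteq> insert x (neighbours E x)}"
    unfolding edges_at_vertex[OF assms] by auto
  then have "{e\<in>E. e \<subseteq> insert x (neighbours E x)}
      = {e\<in>E. e \<subseteq> neighbours E x} \<union> {e\<in>E. x \<in> e}"
    by blast
  then show ?thesis
    unfolding cone_def edges_at_vertex[OF assms] by (auto simp: neighbours_def)
qed

lemma cone_complete_graph_on:
  "x \<notin> W \<Longrightarrow> cone x (W, complete_graph_on W) = (insert x W, complete_graph_on (insert x W))"
  unfolding cone_def complete_graph_on_def by (auto simp: card_2_iff)

lemma Kr_minor_free_neighbours:
  assumes "simple_graph V E" "x \<in> V" "Kr_minor_free (Suc r) V E"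
  shows "Kr_minor_free r (neighbours E x) {e\<in>E. e \<subseteq> neighbours E x}"
  unfolding Kr_minor_free_def
proof (intro notI, elim exE conjE)
  let ?N = "neighbours E x"
  fix W assume W: "card W = r" "finite W" "is_minor (W, complete_graph_on W) (?N, {e\<in>E. e \<subseteq> ?N})"
  have "x \<notin> ?N" "?N \<subseteq> V"
    using not_in_neighbours_self[OF assms(1)] neighbours_subset[OF assms(1)] by auto
  then have "x \<notin> W" using minor_vertices_subset[OF W(3)] by auto
  have "is_minor (insert x W, complete_graph_on (insert x W)) (insert x ?N, {e\<in>E. e \<subseteq> insert x ?N})"
    using cone_minor[OF W(3), of x] simple_graph_induced[OF assms(1) \<open>?N \<subseteq> V\<close>] \<open>x \<notin> ?N\<close>
    by (simp add: cone_neighbours[OF assms(1)] cone_complete_graph_on[OF \<open>x \<notin> W\<close>])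
  moreover have "is_minor (insert x ?N, {e\<in>E. e \<subseteq> insert x ?N}) (V, E)"
    using induced_is_minor[OF assms(1)] \<open>?N \<subseteq> V\<close> assms(2) by simp
  ultimately have "is_minor (insert x W, complete_graph_on (insert x W)) (V, E)"
    by (rule is_minor_trans)
  moreover have "card (insert x W) = Suc r" using W(1,2) \<open>x \<notin> W\<close> by simp
  ultimately show False
    using assms(3) W(2) unfolding Kr_minor_free_def by blast
qed

lemma contract_edge_edges:
  assumes "simple_graph V E" "{u, v} \<in> E" "u \<noteq> v"
  shows "snd (contract_edge u v (V, E))
    = {e\<in>E. v \<notin> e} \<union> (\<lambda>w. {u, w}) ` (neighbours E v - insert u (neighbours E u))"
  using assms(3) not_in_neighbours_self[OF assms(1), of v]
  unfolding contract_edge_def neighbours_def by auto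

lemma card_contract_edge:
  assumes "simple_graph V E" "{u, v} \<in> E" "u \<noteq> v"
  shows "card E
    = card (snd (contract_edge u v (V, E))) + 1 + card (neighbours E u \<inter> neighbours E v)"
proof -
  let ?new = "neighbours E v - insert u (neighbours E u)"
  have "card (snd (contract_edge u v (V, E))) = card {e\<in>E. v \<notin> e} + card ((\<lambda>w. {u, w}) ` ?new)"
    unfolding contract_edge_edges[OF assms]
    by (rule card_Un_disjoint)
      (use simple_graph_finite_edges[OF assms(1)] finite_neighbours[OF assms(1)]
        in \<open>auto simp: neighbours_def\<close>)
  also have "card ((\<lambda>w. {u, w}) ` ?new) = card ?new"
    by (rule card_image[OF inj_on_doubleton])
  moreover have "card E = card {e\<in>E. v \<notin> e} + card (neighbours E v)"
    by (rule card_edges_split_vertex[OF assms(1)])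
  moreover have "u \<in> neighbours E v" using assms(2) by (simp add: neighbours_def insert_commute)
  ultimately show ?thesis using card_neighbours_split[OF assms(1)] by simp
qed

lemma card_contract_edge_inside:
  assumes "simple_graph V E" "{u, v} \<in> E" "u \<noteq> v" "u \<in> A" "v \<notin> A" "neighbours E v \<subseteq> A"
  shows "card {e \<in> snd (contract_edge u v (V, E)). e \<subseteq> A}
    = card {e\<in>E. e \<subseteq> A} + card (neighbours E v - insert u (neighbours E u))"
proof -
  let ?new = "neighbours E v - insert u (neighbours E u)"
  have "{e \<in> snd (contract_edge u v (V, E)). e \<subseteq> A} = {e\<in>E. e \<subseteq> A} \<union> (\<lambda>w. {u, w}) ` ?new"
    using assms(4-6) unfolding contract_edge_edges[OF assms(1-3)] by auto
  also have "card \<dots> = card {e\<in>E. e \<subseteq> A} + card ((\<lambda>w. {u, w}) ` ?new)"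
    by (rule card_Un_disjoint)
      (use simple_graph_finite_edges[OF assms(1)] finite_neighbours[OF assms(1)]
        in \<open>auto simp: neighbours_def\<close>)
  finally show ?thesis by (simp add: card_image[OF inj_on_doubleton])
qed

lemma weighted_card_edges_le_contract_edge:
  fixes K :: nat
  assumes "simple_graph V E" "{u, v} \<in> E" "u \<noteq> v" "u \<in> A" "v \<notin> A" "neighbours E v \<subseteq> A"
    and "card (neighbours E u \<inter> neighbours E v) + 1 < card (neighbours E v)"
    and "card (neighbours E u \<inter> neighbours E v) < K"
  shows "card E + K * card {e\<in>E. e \<subseteq> A}
    \<le> card (snd (contract_edge u v (V, E))) + K * card {e \<in> snd (contract_edge u v (V, E)). e \<subseteq> A}"
proof -
  let ?s = "card (neighbours E v - insert u (neighbours E u))"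
  have "u \<in> neighbours E v" using assms(2) by (simp add: neighbours_def insert_commute)
  then have "1 \<le> ?s" using card_neighbours_split[OF assms(1)] assms(7) by simp
  then have "K \<le> K * ?s" by simp
  moreover have "K * card {e \<in> snd (contract_edge u v (V, E)). e \<subseteq> A}
      = K * card {e\<in>E. e \<subseteq> A} + K * ?s"
    unfolding card_contract_edge_inside[OF assms(1-6)] by (rule add_mult_distrib2)
  ultimately show ?thesis using card_contract_edge[OF assms(1-3)] assms(8) by linarith
qed

section \<open>A linear bound on the edges of a minor-free graph\<close>

(* mader_const r = 2^r - 1, much weaker than Mader's 2^(r-3); only linearity in |V| matters. *)
fun mader_const :: "nat \<Rightarrow> nat" where
  "mader_const 0 = 0"
| "mader_const (Suc r) = 2 * mader_const r + 1"

lemma Kr_minor_free_Suc_ex_low_codegree: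
  fixes V :: "'a set"
  assumes bound: "\<And>(V :: 'a set) E.
      simple_graph V E \<Longrightarrow> Kr_minor_free r V E \<Longrightarrow> card E \<le> mader_const r * card V"
    and "simple_graph V E" "Kr_minor_free (Suc r) V E" "{x, y} \<in> E"
  shows "\<exists>z\<in>neighbours E x. card (neighbours E x \<inter> neighbours E z) < mader_const (Suc r)"
proof (rule ccontr)
  let ?N = "neighbours E x"
  have "x \<in> V" using assms(2,4) unfolding simple_graph_def by blast
  assume "\<not> ?thesis"
  then have "\<forall>z\<in>?N. mader_const (Suc r) \<le> card (neighbours E z \<inter> ?N)"
    by (simp add: not_less Int_commute)
  then have "mader_const (Suc r) * card ?N \<le> 2 * card {e\<in>E. e \<subseteq> ?N}"
    by (rule min_degree_le_edges[OF assms(2) neighbours_subset[OF assms(2)]])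
  moreover have "card {e\<in>E. e \<subseteq> ?N} \<le> mader_const r * card ?N"
    using bound[OF simple_graph_induced[OF assms(2) neighbours_subset[OF assms(2)]]
        Kr_minor_free_neighbours[OF assms(2) \<open>x \<in> V\<close> assms(3)]] .
  moreover have "card ?N > 0"
    using assms(4) finite_neighbours[OF assms(2)] by (auto simp: neighbours_def card_gt_0_iff)
  ultimately show False by simp
qed

lemma Kr_minor_free_Suc_card_edges_le:
  fixes V :: "'a set"
  assumes bound: "\<And>(V :: 'a set) E.
      simple_graph V E \<Longrightarrow> Kr_minor_free r V E \<Longrightarrow> card E \<le> mader_const r * card V"
  shows "simple_graph V E \<Longrightarrow> Kr_minor_free (Suc r) V E \<Longrightarrow> card E \<le> mader_const (Suc r) * card V"
proof (induction "card V" arbitrary: V E rule: less_induct)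
  case less
  let ?D = "mader_const (Suc r)"
  show ?case
  proof (rule ccontr)
    assume many_edges: "\<not> card E \<le> ?D * card V"
    then obtain e where "e \<in> E" by fastforce
    then obtain x y where "{x, y} \<in> E" using simple_graph_edgeE[OF less.prems(1)] by metis
    then obtain z where z: "z \<in> neighbours E x" "card (neighbours E x \<inter> neighbours E z) < ?D"
      using Kr_minor_free_Suc_ex_low_codegree[OF bound less.prems] by blast
    let ?E' = "snd (contract_edge x z (V, E))"
    have "{x, z} \<in> E" using z(1) by (simp add: neighbours_def)
    have "x \<noteq> z" using z(1) not_in_neighbours_self[OF less.prems(1), of x] by auto
    have "z \<in> V" using z(1) neighbours_subset[OF less.prems(1), of x] by auto
    have step: "minor_step (V, E) (V - {z}, ?E')"
      by (rule minor_step_contract_edge[OF \<open>{x, z} \<in> E\<close> \<open>x \<noteq> z\<close>])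
    have "card ?E' \<le> ?D * card (V - {z})"
    proof (rule less.hyps)
      show "card (V - {z}) < card V"
        using \<open>z \<in> V\<close> less.prems(1) unfolding simple_graph_def by (blast intro: card_Diff1_less)
      show "simple_graph (V - {z}) ?E'"
        using simple_graph_minor_step[OF step] less.prems(1) by simp
      show "Kr_minor_free (Suc r) (V - {z}) ?E'"
        by (rule Kr_minor_free_minor_step[OF less.prems(2) step])
    qed
    moreover have "card E = card ?E' + 1 + card (neighbours E x \<inter> neighbours E z)"
      by (rule card_contract_edge[OF less.prems(1) \<open>{x, z} \<in> E\<close> \<open>x \<noteq> z\<close>])
    moreover have "card V = Suc (card (V - {z}))"
      using \<open>z \<in> V\<close> less.prems(1) unfolding simple_graph_def by (blast intro: card.remove)
    ultimately show False using z(2) many_edges by simp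
  qed
qed

lemma Kr_minor_free_card_edges_le:
  "simple_graph V E \<Longrightarrow> Kr_minor_free r V E \<Longrightarrow> card E \<le> mader_const r * card V"
proof (induction r arbitrary: V E)
  case 0
  then show ?case using Kr_minor_free_clique_card_less[of V E 0 "{}"] by (simp add: clique_def)
next
  case (Suc r)
  then show ?case using Kr_minor_free_Suc_card_edges_le by blast
qed

section \<open>Eliminating the independent side\<close>

lemma clique_if_min_degree:
  assumes "simple_graph V E" "finite N" "\<forall>y\<in>N. card N \<le> card (neighbours E y \<inter> N) + 1"
  shows "clique E N"
  unfolding clique_def
proof (intro ballI impI)
  fix y z assume "y \<in> N" "z \<in> N" "y \<noteq> z"
  have "neighbours E y \<inter> N \<subseteq> N - {y}" using not_in_neighbours_self[OF assms(1), of y] by blast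
  moreover have "card (N - {y}) \<le> card (neighbours E y \<inter> N)"
    using assms(2,3) \<open>y \<in> N\<close> by fastforce
  ultimately have "neighbours E y \<inter> N = N - {y}" using assms(2) by (simp add: card_seteq)
  then show "{y, z} \<in> E" using \<open>z \<in> N\<close> \<open>y \<noteq> z\<close> by (auto simp: neighbours_def)
qed

lemma clique_insert_neighbours:
  assumes "clique E (neighbours E b)"
  shows "clique E (insert b (neighbours E b))"
  unfolding clique_def
proof (intro ballI impI)
  fix y z assume "y \<in> insert b (neighbours E b)" "z \<in> insert b (neighbours E b)" "y \<noteq> z"
  then consider "y = b" "z \<in> neighbours E b" | "z = b" "y \<in> neighbours E b"
    | "y \<in> neighbours E b" "z \<in> neighbours E b"
    by blast
  then show "{y, z} \<in> E"
  proof cases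
    case 2
    then have "z \<in> neighbours E y" using in_neighbours_commute by metis
    then show ?thesis by (simp add: neighbours_def)
  qed (use assms \<open>y \<noteq> z\<close> in \<open>simp_all add: clique_def neighbours_def\<close>)
qed

lemma Kr_minor_free_ex_low_codegree:
  assumes "simple_graph V E" "Kr_minor_free r V E" "neighbours E b \<noteq> {}"
    and "r \<le> card (neighbours E b) + 1"
  shows "\<exists>a\<in>neighbours E b. card (neighbours E a \<inter> neighbours E b) + 1 < card (neighbours E b)
    \<and> card (neighbours E a \<inter> neighbours E b) \<le> 2 * mader_const r"
proof -
  let ?N = "neighbours E b"
  have N: "?N \<subseteq> V" "finite ?N" "b \<notin> ?N"
    using neighbours_subset[OF assms(1)] finite_neighbours[OF assms(1)]
      not_in_neighbours_self[OF assms(1)] by auto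
  obtain w where "w \<in> ?N" using assms(3) by blast
  then obtain a where a: "a \<in> ?N"
    and a_min: "\<forall>y\<in>?N. card (neighbours E a \<inter> ?N) \<le> card (neighbours E y \<inter> ?N)"
    using ex_has_least_nat[of "\<lambda>y. y \<in> ?N" w "\<lambda>y. card (neighbours E y \<inter> ?N)"] by auto
  have "card (neighbours E a \<inter> ?N) * card ?N \<le> 2 * card {e\<in>E. e \<subseteq> ?N}"
    using min_degree_le_edges[OF assms(1) N(1) a_min] .
  also have "\<dots> \<le> 2 * (mader_const r * card ?N)"
    using Kr_minor_free_card_edges_le[OF simple_graph_induced Kr_minor_free_induced] assms(1,2) N(1)
    by simp
  finally have "card (neighbours E a \<inter> ?N) \<le> 2 * mader_const r"
    using assms(3) N(2) by (simp add: card_gt_0_iff)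
  moreover have "card (neighbours E a \<inter> ?N) + 1 < card ?N"
  proof (rule ccontr)
    assume "\<not> card (neighbours E a \<inter> ?N) + 1 < card ?N"
    then have "clique E (insert b ?N)"
      using clique_insert_neighbours clique_if_min_degree[OF assms(1) N(2)] a_min by force
    moreover have "b \<in> neighbours E w" using \<open>w \<in> ?N\<close> in_neighbours_commute by metis
    then have "b \<in> V" using neighbours_subset[OF assms(1), of w] by blast
    ultimately have "card (insert b ?N) < r"
      using Kr_minor_free_clique_card_less[OF assms(1,2)] N(1) by simp
    then show False using assms(4) N(2,3) by simp
  qed
  ultimately show ?thesis using a by blast
qed

lemma Kr_minor_free_remove_vertex_outside:
  fixes r :: nat
  defines "K \<equiv> 2 * mader_const r + 1"
  assumes "simple_graph V E" "Kr_minor_free r V E" "b \<in> V" "b \<notin> A" "\<forall>e\<in>E. e \<inter> A \<noteq> {}"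
  obtains E' where "minor_step (V, E) (V - {b}, E')" "\<forall>e\<in>E'. e \<inter> A \<noteq> {}"
    "card E + K * card {e\<in>E. e \<subseteq> A} \<le> card E' + K * card {e\<in>E'. e \<subseteq> A} + (r - 2)"
proof (cases "card (neighbours E b) \<le> r - 2")
  case True
  let ?E' = "{e\<in>E. b \<notin> e}"
  have "card E = card ?E' + card (neighbours E b)" by (rule card_edges_split_vertex[OF assms(2)])
  moreover have "{e\<in>?E'. e \<subseteq> A} = {e\<in>E. e \<subseteq> A}" using assms(5) by auto
  ultimately show ?thesis
    using that[OF minor_step_delete_vertex[OF assms(4)]] assms(6) True by simp
next
  case False
  let ?N = "neighbours E b"
  have "?N \<noteq> {}" "r \<le> card ?N + 1" using False by auto
  then obtain a where a: "a \<in> ?N" and low: "card (neighbours E a \<inter> ?N) + 1 < card ?N"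
    and codegree: "card (neighbours E a \<inter> ?N) \<le> 2 * mader_const r"
    using Kr_minor_free_ex_low_codegree[OF assms(2,3)] by blast
  let ?E' = "snd (contract_edge a b (V, E))"
  have N_A: "?N \<subseteq> A" using assms(5,6) by (auto simp: neighbours_def)
  have ab: "{a, b} \<in> E" "a \<noteq> b" "a \<in> A"
    using a N_A not_in_neighbours_self[OF assms(2), of b]
    by (auto simp: neighbours_def insert_commute)
  have "\<forall>e\<in>?E'. e \<inter> A \<noteq> {}"
    using assms(6) \<open>a \<in> A\<close> unfolding contract_edge_edges[OF assms(2) ab(1,2)] by auto
  moreover have "card E + K * card {e\<in>E. e \<subseteq> A} \<le> card ?E' + K * card {e\<in>?E'. e \<subseteq> A}"
    using codegree unfolding K_def
    by (intro weighted_card_edges_le_contract_edge[OF assms(2) ab assms(5) N_A low]) simp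
  ultimately show ?thesis using that[OF minor_step_contract_edge[OF ab(1,2)]] by simp
qed

lemma Kr_minor_free_weighted_card_edges_le:
  fixes r :: nat and A B :: "'a set"
  defines "D \<equiv> mader_const r"
  assumes "finite B" "simple_graph V E" "Kr_minor_free r V E" "A \<union> B = V" "A \<inter> B = {}"
    and "\<forall>e\<in>E. e \<inter> A \<noteq> {}"
  shows "card E + (2 * D + 1) * card {e\<in>E. e \<subseteq> A} \<le> (r - 2) * card B + (2 * D + 2) * D * card A"
  using assms(2-)
proof (induction B arbitrary: V E rule: finite_induct)
  case empty
  then have "{e\<in>E. e \<subseteq> A} = E" "card E \<le> D * card A"
    using Kr_minor_free_card_edges_le unfolding D_def simple_graph_def by auto
  then have "card E + (2 * D + 1) * card {e\<in>E. e \<subseteq> A} \<le> (2 * D + 2) * (D * card A)"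
    by (metis add_mult_distrib mult_1 mult_le_mono2 add.commute add.left_commute one_add_one)
  then show ?case by (simp add: algebra_simps)
next
  case (insert b B)
  have "b \<in> V" "b \<notin> A" using insert by auto
  then obtain E' where step: "minor_step (V, E) (V - {b}, E')" and "\<forall>e\<in>E'. e \<inter> A \<noteq> {}"
    and "card E + (2 * D + 1) * card {e\<in>E. e \<subseteq> A}
      \<le> card E' + (2 * D + 1) * card {e\<in>E'. e \<subseteq> A} + (r - 2)"
    using Kr_minor_free_remove_vertex_outside[OF insert.prems(1,2)] insert.prems(5)
    unfolding D_def by blast
  moreover have "card E' + (2 * D + 1) * card {e\<in>E'. e \<subseteq> A}
      \<le> (r - 2) * card B + (2 * D + 2) * D * card A"
  proof (rule insert.IH)
    show "simple_graph (V - {b}) E'" using simple_graph_minor_step[OF step] insert.prems(1) by simp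
    show "Kr_minor_free r (V - {b}) E'" by (rule Kr_minor_free_minor_step[OF insert.prems(2) step])
  qed (use insert \<open>\<forall>e\<in>E'. e \<inter> A \<noteq> {}\<close> in auto)
  moreover have "(r - 2) * card (insert b B) = (r - 2) * card B + (r - 2)" using insert by simp
  ultimately show ?case by linarith
qed

lemma bipartite_Kr_minor_free_card_edges_le:
  assumes "simple_graph V E" "Kr_minor_free r V E" "bipartite_with V E A B"
  shows "card E \<le> (r - 2) * card V + (2 * mader_const r + 2) * mader_const r * card A"
proof -
  have "finite B" "A \<union> B = V" "A \<inter> B = {}" "\<forall>e\<in>E. e \<inter> A \<noteq> {}"
    using assms(1,3) unfolding bipartite_with_def simple_graph_def by auto
  then have "card E \<le> (r - 2) * card B + (2 * mader_const r + 2) * mader_const r * card A"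
    using Kr_minor_free_weighted_card_edges_le[OF _ assms(1,2)] by fastforce
  moreover have "card B \<le> card V"
    using \<open>A \<union> B = V\<close> assms(1) unfolding simple_graph_def by (auto intro: card_mono)
  ultimately show ?thesis using mult_le_mono2 by (meson add_le_mono1 le_trans)
qed

theorem lemma2p5:
  fixes r :: nat
  assumes "r \<ge> 3"
  shows "\<exists>C::real. \<forall>(V::nat set) E A B.
           simple_graph V E \<and> Kr_minor_free r V E \<and> bipartite_with V E A B \<longrightarrow>
           real (card E) \<le> (real r - 2) * real (card V) + C * real (card A)"
proof (intro exI[of _ "real ((2 * mader_const r + 2) * mader_const r)"] allI impI)
  fix V :: "nat set" and E A B
  assume "simple_graph V E \<and> Kr_minor_free r V E \<and> bipartite_with V E A B"
  then have "real (card E)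
      \<le> real ((r - 2) * card V + (2 * mader_const r + 2) * mader_const r * card A)"
    using bipartite_Kr_minor_free_card_edges_le by (metis of_nat_le_iff)
  then show "real (card E) \<le> (real r - 2) * real (card V)
      + real ((2 * mader_const r + 2) * mader_const r) * real (card A)"
    using assms by (simp add: of_nat_diff)
qed

end
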